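(* There is no polynomial $p$ together with a sequence $\{D_n\}_{n\ge1}$ of simple definite causal theories such that, for every $n$, $D_n$ is on signature $\{x_1,\dots,x_n\}$, the set of models of $D_n$ is exactly PARITY$_n$, and $|D_n|\le p(n)$.
   Context: A literal is a variable $x$ or its negation $\neg x$. A definite causal theory on signature $\{x_1,\dots,x_n\}$ is a finite set of causal rules $H\Leftarrow G$, where $H$ is a literal over $x_1,\dots,x_n$ or $\bot$, and $G$ is a propositional formula over $x_1,\dots,x_n$. It is simple if every body $G$ is a conjunction of literals. For $I\subseteq\{x_1,\dots,x_n\}$ (viewed as the interpretation making exactly the variables in $I$ true), the reduct $D^I$ is the set of heads $H$ of all rules $H\Leftarrow G$ of $D$ with $I\models G$. $I$ is a model of $D$ if $I$ is the unique interpretation of $\{x_1,\dots,x_n\}$ satisfying every element of $D^I$. The size of a simple definite theory is its number of rules. Strings $w\in\{0,1\}^n$ are identified with $\{x_i:w_i=1\}$; PARITY$_n$ is the set of strings in $\{0,1\}^n$ with an odd number of 1's. *)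

theory Defs
  imports Main "HOL-Computational_Algebra.Polynomial"
begin

text \<open>Variables are x_1,...,x_n, represented by the natural numbers 1..n.
  An interpretation is the set of variables it makes true.\<close>

datatype literal = Pos nat | Neg nat

datatype head = HLit literal | HBot

text \<open>A simple causal rule H <= G: the body G is a conjunction of literals,
  represented by the list of its conjuncts (empty list = empty conjunction = True).\<close>
type_synonym rule = "head \<times> literal list"

fun lit_var :: "literal \<Rightarrow> nat" where
  "lit_var (Pos x) = x" | "lit_var (Neg x) = x"

fun sat_lit :: "nat set \<Rightarrow> literal \<Rightarrow> bool" where
  "sat_lit I (Pos x) = (x \<in> I)"
| "sat_lit I (Neg x) = (x \<notin> I)"

fun sat_head :: "nat set \<Rightarrow> head \<Rightarrow> bool" where
  "sat_head I (HLit l) = sat_lit I l"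
| "sat_head I HBot = False"

definition sat_body :: "nat set \<Rightarrow> literal list \<Rightarrow> bool" where
  "sat_body I G = (\<forall>l\<in>set G. sat_lit I l)"

fun head_vars :: "head \<Rightarrow> nat set" where
  "head_vars (HLit l) = {lit_var l}"
| "head_vars HBot = {}"

definition simple_theory_on :: "nat \<Rightarrow> rule set \<Rightarrow> bool" where
  "simple_theory_on n D = (finite D \<and>
     (\<forall>(H, G)\<in>D. head_vars H \<subseteq> {1..n} \<and> lit_var ` set G \<subseteq> {1..n}))"

definition reduct :: "rule set \<Rightarrow> nat set \<Rightarrow> head set" where
  "reduct D I = {H. \<exists>G. (H, G) \<in> D \<and> sat_body I G}"

definition is_model :: "nat \<Rightarrow> rule set \<Rightarrow> nat set \<Rightarrow> bool" where
  "is_model n D I = (I \<subseteq> {1..n} \<and>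
     (\<forall>J. J \<subseteq> {1..n} \<longrightarrow> ((\<forall>H\<in>reduct D I. sat_head J H) \<longleftrightarrow> J = I)))"

definition models :: "nat \<Rightarrow> rule set \<Rightarrow> nat set set" where
  "models n D = {I. is_model n D I}"

definition parity :: "nat \<Rightarrow> nat set set" where
  "parity n = {I. I \<subseteq> {1..n} \<and> odd (card I)}"

end

theory Submission
  imports Defs "HOL-Library.FuncSet" "HOL-Real_Asymp.Real_Asymp"
begin

text \<open>An even interpretation \<open>E\<close> is not a model of a theory \<open>D\<close> for \<open>PARITY\<^sub>n\<close>. Either some
  rule fires at \<open>E\<close> with a false head, and each rule does so for at most one even \<open>E\<close> because
  all neighbours of \<open>E\<close> are odd, hence models; or some variable \<open>x\<^sub>i\<close> is unsupported at \<open>E\<close>: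
  no rule with head on \<open>x\<^sub>i\<close> fires at \<open>E\<close>, while every neighbour of \<open>E\<close>, being a model, fires
  one. Such \<open>E\<close> form a critical family for the bodies of these rules, and critical families
  are small. If many flips of \<open>E\<close> are witnessed by narrow bodies (at most \<open>w\<close> literals), a
  random restriction leaving each variable free with probability \<open>1/(2w)\<close> forces many
  variables on average, and a Kraft-type inequality for forced variables bounds the number of
  such \<open>E\<close>; if many flips need wide bodies, \<open>E\<close> is rare because a wide body is satisfied by
  few interpretations. For \<open>n = w\<^sup>2\<close> and polynomially many rules, these cases cover only a
  vanishing fraction of the \<open>2 ^ (n - 1)\<close> even interpretations.\<close>

section \<open>Interpretations and flips\<close>

definition body_vars :: "literal list \<Rightarrow> nat set" where
  "body_vars G = lit_var ` set G"

definition flip :: "nat set \<Rightarrow> nat \<Rightarrow> nat set" where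
  "flip E j = (if j \<in> E then E - {j} else insert j E)"

lemma mem_flip_iff: "x \<in> flip E j \<longleftrightarrow> (if x = j then j \<notin> E else x \<in> E)"
  by (auto simp: flip_def)

lemma flip_flip [simp]: "flip (flip E j) j = E"
  by (auto simp: flip_def)

lemma flip_neq: "flip E j \<noteq> E"
  by (metis mem_flip_iff)

lemma flip_subset: "E \<subseteq> U \<Longrightarrow> j \<in> U \<Longrightarrow> flip E j \<subseteq> U"
  by (auto simp: flip_def)

lemma inj_on_flip: "inj_on (\<lambda>E. flip E j) S"
  by (rule inj_onI) (metis flip_flip)

lemma even_card_flip:
  assumes "finite E"
  shows "even (card (flip E j)) \<longleftrightarrow> odd (card E)"
proof (cases "j \<in> E")
  case True
  then have "card E = Suc (card (E - {j}))"
    using assms by (metis card_Suc_Diff1)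
  then show ?thesis using True by (simp add: flip_def)
qed (use assms in \<open>simp add: flip_def\<close>)

lemma card_even_subsets:
  assumes "finite U" "U \<noteq> {}"
  shows "2 * card {E \<in> Pow U. even (card E)} = 2 ^ card U"
proof -
  have "card {E \<in> Pow U. even (card E)} = card {E \<in> Pow U. odd (card E)}"
    using card_subsupersets_even_odd[of U "{}"] assms by auto
  moreover have "card (Pow U) = card {E \<in> Pow U. even (card E)} + card {E \<in> Pow U. odd (card E)}"
    using assms(1) by (subst card_Un_disjoint[symmetric]) (auto intro: arg_cong[where f = card])
  ultimately show ?thesis
    using assms(1) by (simp add: card_Pow)
qed

lemma sat_lit_cong: "(lit_var l \<in> E1 \<longleftrightarrow> lit_var l \<in> E2) \<Longrightarrow> sat_lit E1 l = sat_lit E2 l"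
  by (cases l) auto

lemma sat_body_cong:
  "(\<And>x. x \<in> body_vars G \<Longrightarrow> x \<in> E1 \<longleftrightarrow> x \<in> E2) \<Longrightarrow> sat_body E1 G = sat_body E2 G"
  unfolding sat_body_def body_vars_def by (metis image_eqI sat_lit_cong)

lemma sat_head_cong:
  "(\<And>x. x \<in> head_vars H \<Longrightarrow> x \<in> E1 \<longleftrightarrow> x \<in> E2) \<Longrightarrow> sat_head E1 H = sat_head E2 H"
  by (cases H) (auto intro!: sat_lit_cong)

lemma sat_body_flip_other: "j \<notin> body_vars G \<Longrightarrow> sat_body (flip E j) G = sat_body E G"
  by (rule sat_body_cong) (auto simp: mem_flip_iff)

lemma sat_head_flip_other: "j \<notin> head_vars H \<Longrightarrow> sat_head (flip E j) H = sat_head E H"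
  by (rule sat_head_cong) (auto simp: mem_flip_iff)

lemma sat_body_agree:
  assumes "sat_body E1 G" "sat_body E2 G" "x \<in> body_vars G"
  shows "x \<in> E1 \<longleftrightarrow> x \<in> E2"
proof -
  obtain l where l: "l \<in> set G" "lit_var l = x"
    using assms(3) unfolding body_vars_def by auto
  then have "sat_lit E1 l" "sat_lit E2 l"
    using assms(1,2) unfolding sat_body_def by auto
  then show ?thesis using l by (cases l) auto
qed

lemma sat_head_agree:
  assumes "\<not> sat_head E1 H" "\<not> sat_head E2 H" "x \<in> head_vars H"
  shows "x \<in> E1 \<longleftrightarrow> x \<in> E2"
proof (cases H)
  case (HLit l)
  then show ?thesis
    using assms by (cases l) auto
qed (use assms in simp)

lemma card_sat_body_le:
  assumes "finite U" "body_vars G \<subseteq> U"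
  shows "card {E \<in> Pow U. sat_body E G} \<le> 2 ^ (card U - card (body_vars G))"
proof -
  let ?S = "{E \<in> Pow U. sat_body E G}"
  have "inj_on (\<lambda>E. E - body_vars G) ?S"
  proof (rule inj_onI)
    fix E1 E2 assume "E1 \<in> ?S" "E2 \<in> ?S" "E1 - body_vars G = E2 - body_vars G"
    then show "E1 = E2" using sat_body_agree[of E1 G E2] by blast
  qed
  then have "card ?S = card ((\<lambda>E. E - body_vars G) ` ?S)"
    by (simp add: card_image)
  also have "\<dots> \<le> card (Pow (U - body_vars G))"
    by (rule card_mono) (use assms in auto)
  also have "\<dots> = 2 ^ (card U - card (body_vars G))"
    using assms by (simp add: card_Pow card_Diff_subset finite_subset)
  finally show ?thesis .
qed

section \<open>Forced variables\<close>

text \<open>The variables \<open>j \<notin> R\<close> on which some body of \<open>B\<close> becomes a single literal once its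
  other literals are evaluated under the partial assignment \<open>\<rho>\<close> of \<open>R\<close>: an interpretation
  extending \<open>\<rho>\<close> that falsifies every body of \<open>B\<close> must falsify that literal.\<close>

definition forced_vars :: "nat set \<Rightarrow> literal list set \<Rightarrow> nat set \<Rightarrow> nat set \<Rightarrow> nat set" where
  "forced_vars U B R \<rho> = {j \<in> U - R. \<exists>G\<in>B. body_vars G - {j} \<subseteq> R
      \<and> (\<forall>l\<in>set G. lit_var l \<noteq> j \<longrightarrow> sat_lit \<rho> l) \<and> \<not> (Pos j \<in> set G \<and> Neg j \<in> set G)}"

lemma forced_vars_subset: "forced_vars U B R \<rho> \<subseteq> U - R"
  by (auto simp: forced_vars_def)

lemma finite_forced_vars: "finite U \<Longrightarrow> finite (forced_vars U B R \<rho>)"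
  using forced_vars_subset by (rule finite_subset) auto

lemma falsified_body_forces_var:
  assumes "\<not> sat_body E G" "body_vars G - {j} \<subseteq> R"
    "\<forall>l\<in>set G. lit_var l \<noteq> j \<longrightarrow> sat_lit (E \<inter> R) l" "\<not> (Pos j \<in> set G \<and> Neg j \<in> set G)"
  shows "j \<in> E \<longleftrightarrow> Neg j \<in> set G"
proof -
  obtain l where l: "l \<in> set G" "\<not> sat_lit E l"
    using assms(1) unfolding sat_body_def by auto
  have "lit_var l = j"
  proof (rule ccontr)
    assume "lit_var l \<noteq> j"
    moreover from this have "sat_lit (E \<inter> R) l = sat_lit E l"
      using assms(2) l(1) by (intro sat_lit_cong) (auto simp: body_vars_def)
    ultimately show False using assms(3) l by auto
  qed
  then show ?thesis using l assms(4) by (cases l) auto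
qed

lemma forced_vars_agree:
  assumes "\<forall>G\<in>B. \<not> sat_body E1 G" "\<forall>G\<in>B. \<not> sat_body E2 G"
    and "E1 \<inter> R = \<rho>" "E2 \<inter> R = \<rho>" "j \<in> forced_vars U B R \<rho>"
  shows "j \<in> E1 \<longleftrightarrow> j \<in> E2"
proof -
  obtain G where "G \<in> B" "body_vars G - {j} \<subseteq> R" "\<forall>l\<in>set G. lit_var l \<noteq> j \<longrightarrow> sat_lit \<rho> l"
    "\<not> (Pos j \<in> set G \<and> Neg j \<in> set G)"
    using assms(5) unfolding forced_vars_def by blast
  then show ?thesis
    using falsified_body_forces_var[of E1 G j R] falsified_body_forces_var[of E2 G j R] assms(1-4) by auto
qed

lemma card_fiber_le:
  assumes "finite U" "R \<subseteq> U" "T \<subseteq> Pow U" "\<forall>E\<in>T. \<forall>G\<in>B. \<not> sat_body E G"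
  shows "card {E \<in> T. E \<inter> R = \<rho>} \<le> 2 ^ (card U - card R - card (forced_vars U B R \<rho>))"
proof -
  let ?F = "forced_vars U B R \<rho>"
  let ?S = "{E \<in> T. E \<inter> R = \<rho>}"
  have "inj_on (\<lambda>E. E - R - ?F) ?S"
  proof (rule inj_onI)
    fix E1 E2 assume E: "E1 \<in> ?S" "E2 \<in> ?S" "E1 - R - ?F = E2 - R - ?F"
    show "E1 = E2"
    proof (rule set_eqI)
      fix x
      consider "x \<in> R" | "x \<in> ?F" | "x \<notin> R" "x \<notin> ?F" by blast
      then show "x \<in> E1 \<longleftrightarrow> x \<in> E2"
        by cases (use E assms(4) forced_vars_agree[of B E1 E2 R \<rho> x U] in auto)
    qed
  qed
  then have "card ?S = card ((\<lambda>E. E - R - ?F) ` ?S)"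
    by (simp add: card_image)
  also have "\<dots> \<le> card (Pow (U - R - ?F))"
    by (rule card_mono) (use assms in auto)
  also have "\<dots> = 2 ^ (card (U - R) - card ?F)"
    using assms(1) card_Diff_subset[OF finite_forced_vars forced_vars_subset]
    by (simp add: card_Pow)
  also have "card (U - R) = card U - card R"
    using assms(1,2) by (simp add: card_Diff_subset finite_subset)
  finally show ?thesis .
qed

lemma card_forced_vars_le:
  assumes "finite U" "R \<subseteq> U"
  shows "card (forced_vars U B R \<rho>) \<le> card U - card R"
proof -
  have "card (forced_vars U B R \<rho>) \<le> card (U - R)"
    using assms forced_vars_subset by (intro card_mono) auto
  then show ?thesis
    using assms by (simp add: card_Diff_subset finite_subset)
qed

lemma sum_two_pow_card_forced_vars_le:
  assumes "finite U" "R \<subseteq> U" "T \<subseteq> Pow U" "\<forall>E\<in>T. \<forall>G\<in>B. \<not> sat_body E G"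
  shows "(\<Sum>E\<in>T. (2::nat) ^ card (forced_vars U B R (E \<inter> R))) \<le> 2 ^ card U"
proof -
  have "finite T" "finite R"
    using assms by (auto intro: finite_subset)
  then have "(\<Sum>E\<in>T. (2::nat) ^ card (forced_vars U B R (E \<inter> R)))
      = (\<Sum>\<rho>\<in>Pow R. card {E \<in> T. E \<inter> R = \<rho>} * 2 ^ card (forced_vars U B R \<rho>))"
    using sum_fun_comp[of T "Pow R" "\<lambda>E. E \<inter> R" "\<lambda>\<rho>. (2::nat) ^ card (forced_vars U B R \<rho>)"]
    by auto
  also have "\<dots> \<le> (\<Sum>\<rho>\<in>Pow R. 2 ^ (card U - card R))"
  proof (rule sum_mono)
    fix \<rho>
    have "card {E \<in> T. E \<inter> R = \<rho>} * 2 ^ card (forced_vars U B R \<rho>)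
        \<le> 2 ^ (card U - card R - card (forced_vars U B R \<rho>)) * 2 ^ card (forced_vars U B R \<rho>)"
      using card_fiber_le[OF assms] by simp
    also have "\<dots> = 2 ^ (card U - card R)"
      using card_forced_vars_le[OF assms(1,2), of B \<rho>] by (simp flip: power_add)
    finally show "card {E \<in> T. E \<inter> R = \<rho>} * 2 ^ card (forced_vars U B R \<rho>) \<le> (2::nat) ^ (card U - card R)" .
  qed
  also have "\<dots> = 2 ^ card R * 2 ^ (card U - card R)"
    using \<open>finite R\<close> by (simp add: card_Pow)
  also have "\<dots> = 2 ^ card U"
    using card_mono[OF assms(1,2)] by (simp flip: power_add)
  finally show ?thesis .
qed

section \<open>Random restrictions\<close>

lemma card_mult_two_powr_mean_le:
  fixes f :: "'a \<Rightarrow> real"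
  assumes "finite S" "S \<noteq> {}"
  shows "card S * 2 powr (sum f S / card S) \<le> (\<Sum>x\<in>S. 2 powr f x)"
proof -
  define a where "a = sum f S / card S"
  have "card S > 0"
    using assms by (simp add: card_gt_0_iff)
  \<comment> \<open>tangent line of the convex function \<open>2 powr x\<close> at \<open>a\<close>\<close>
  have tangent: "2 powr a * (1 + (f x - a) * ln 2) \<le> 2 powr f x" for x
  proof -
    have "exp (a * ln 2) * (1 + (f x - a) * ln 2) \<le> exp (a * ln 2) * exp ((f x - a) * ln 2)"
      by (intro mult_left_mono exp_ge_add_one_self) auto
    also have "\<dots> = exp (f x * ln 2)"
      by (simp flip: exp_add add: algebra_simps)
    finally show ?thesis by (simp add: powr_def mult.commute)
  qed
  have "(\<Sum>x\<in>S. 1 + (f x - a) * ln 2) = card S"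
    using \<open>card S > 0\<close> by (simp add: sum.distrib sum_subtractf a_def flip: sum_distrib_right)
  then have "(\<Sum>x\<in>S. 2 powr a * (1 + (f x - a) * ln 2)) = card S * 2 powr a"
    by (simp flip: sum_distrib_left)
  moreover have "(\<Sum>x\<in>S. 2 powr a * (1 + (f x - a) * ln 2)) \<le> (\<Sum>x\<in>S. 2 powr f x)"
    by (intro sum_mono tangent)
  ultimately show ?thesis by (simp add: a_def)
qed

lemma sum_card_filter_swap:
  assumes "finite X" "finite Y"
  shows "(\<Sum>x\<in>X. card {y \<in> Y. P x y}) = (\<Sum>y\<in>Y. card {x \<in> X. P x y})"
proof -
  have "card {y \<in> Y. P x y} = (\<Sum>y\<in>Y. if P x y then 1 else 0)"
    "card {x \<in> X. P x y} = (\<Sum>x\<in>X. if P x y then 1 else 0)" for x y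
    using assms by (simp_all flip: sum.inter_filter)
  then show ?thesis by (simp only: sum.swap[of _ Y])
qed

lemma one_half_le_power_one_minus:
  assumes "2 * a \<le> k" "(1::real) \<le> k"
  shows "1 / 2 \<le> (1 - 1 / k) ^ a"
proof -
  have "1 + a * (- 1 / k) \<le> (1 + (- 1 / k)) ^ a"
    using assms by (intro Bernoulli_inequality) simp
  moreover have "1 / 2 \<le> 1 + a * (- 1 / k)"
    using assms by (simp add: field_simps)
  ultimately show ?thesis by simp
qed

text \<open>A restriction \<open>t\<close> fixes the variable \<open>v\<close> unless \<open>t v = 0\<close>: for a uniformly random
  \<open>t\<close>, every variable stays free independently with probability \<open>1/k\<close>.\<close>

definition restrictions :: "nat set \<Rightarrow> nat \<Rightarrow> (nat \<Rightarrow> nat) set" where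
  "restrictions U k = U \<rightarrow>\<^sub>E {0..<k}"

definition fixed_vars :: "nat set \<Rightarrow> (nat \<Rightarrow> nat) \<Rightarrow> nat set" where
  "fixed_vars U t = {v \<in> U. t v \<noteq> 0}"

lemma restrictions_free_fixing_eq_PiE:
  assumes "j \<in> U" "V \<subseteq> U - {j}" "k \<ge> 1"
  shows "{t \<in> restrictions U k. t j = 0 \<and> (\<forall>v\<in>V. t v \<noteq> 0)}
       = PiE U (\<lambda>u. if u = j then {0} else if u \<in> V then {1..<k} else {0..<k})"
    (is "_ = PiE U ?S")
proof (intro equalityI subsetI)
  fix t assume "t \<in> {t \<in> restrictions U k. t j = 0 \<and> (\<forall>v\<in>V. t v \<noteq> 0)}"
  then show "t \<in> PiE U ?S"
    by (auto simp: restrictions_def PiE_iff)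
next
  fix t assume t: "t \<in> PiE U ?S"
  have "PiE U ?S \<subseteq> restrictions U k"
    using assms(3) unfolding restrictions_def by (intro PiE_mono) auto
  moreover have "t v \<noteq> 0" if "v \<in> V" for v
    using PiE_mem[OF t, of v] that subsetD[OF assms(2) that] by simp
  ultimately show "t \<in> {t \<in> restrictions U k. t j = 0 \<and> (\<forall>v\<in>V. t v \<noteq> 0)}"
    using t PiE_mem[OF t assms(1)] by auto
qed

lemma card_restrictions_free_fixing:
  assumes "finite U" "j \<in> U" "V \<subseteq> U - {j}" "k \<ge> 1"
  shows "card {t \<in> restrictions U k. t j = 0 \<and> (\<forall>v\<in>V. t v \<noteq> 0)}
       = (k - 1) ^ card V * k ^ (card U - 1 - card V)"
proof -
  define S where "S u = (if u = j then {0} else if u \<in> V then {1..<k} else {0..<k})" for u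
  have "card {t \<in> restrictions U k. t j = 0 \<and> (\<forall>v\<in>V. t v \<noteq> 0)} = card (S j) * (\<Prod>u\<in>U - {j}. card (S u))"
    using assms restrictions_free_fixing_eq_PiE[OF assms(2-4)]
    by (simp add: card_PiE prod.remove S_def)
  also have "\<dots> = (\<Prod>u\<in>U - {j}. if u \<in> V then k - 1 else k)"
    by (auto simp: S_def split: if_splits intro!: prod.cong)
  also have "\<dots> = (\<Prod>u\<in>(U - {j}) \<inter> V. k - 1) * (\<Prod>u\<in>(U - {j}) - V. k)"
    using assms by (simp add: prod.If_cases Int_def Diff_eq)
  also have "(U - {j}) \<inter> V = V"
    using assms(3) by blast
  also have "(\<Prod>u\<in>V. k - 1) * (\<Prod>u\<in>U - {j} - V. k) = (k - 1) ^ card V * k ^ card (U - {j} - V)"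
    by simp
  also have "card (U - {j} - V) = card U - 1 - card V"
    using assms by (simp add: card_Diff_subset finite_subset)
  finally show ?thesis .
qed

lemma card_restrictions_free_fixing_ge:
  assumes "finite U" "j \<in> U" "V \<subseteq> U - {j}" "card V \<le> w" "w \<ge> 1"
  shows "real (2 * w) ^ card U / (4 * real w)
           \<le> card {t \<in> restrictions U (2 * w). t j = 0 \<and> (\<forall>v\<in>V. t v \<noteq> 0)}"
proof -
  define k :: real where "k = 2 * w"
  define a m where "a = card V" and "m = card U - 1 - card V"
  have "card V \<le> card U - 1" "card U > 0"
    using assms card_mono[of "U - {j}" V] by (auto simp: card_gt_0_iff)
  then have n: "card U = Suc (m + a)"
    by (simp add: a_def m_def)
  have k: "k \<ge> 2"
    using assms by (simp add: k_def)
  have "k ^ a * (1 / 2) \<le> k ^ a * (1 - 1 / k) ^ a"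
    using assms by (intro mult_left_mono one_half_le_power_one_minus) (auto simp: k_def a_def)
  also have "k ^ a * (1 - 1 / k) ^ a = (k - 1) ^ a"
    using k by (simp add: right_diff_distrib flip: power_mult_distrib)
  finally have half: "k ^ a / 2 \<le> (k - 1) ^ a"
    by simp
  have "real (2 * w) ^ card U / (4 * real w) = k ^ a / 2 * k ^ m"
    using k unfolding n k_def by (simp add: power_add)
  also have "\<dots> \<le> (k - 1) ^ a * k ^ m"
    using half k by (intro mult_right_mono) auto
  also have "\<dots> = real ((2 * w - 1) ^ card V * (2 * w) ^ (card U - 1 - card V))"
    using assms by (simp add: k_def a_def m_def of_nat_diff)
  also have "\<dots> = card {t \<in> restrictions U (2 * w). t j = 0 \<and> (\<forall>v\<in>V. t v \<noteq> 0)}"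
    using card_restrictions_free_fixing[OF assms(1-3), of "2 * w"] assms by simp
  finally show ?thesis .
qed

section \<open>Critical families\<close>

definition narrow_flips :: "literal list set \<Rightarrow> nat \<Rightarrow> nat set \<Rightarrow> nat set \<Rightarrow> nat set" where
  "narrow_flips B w A E = {j \<in> A. \<exists>G\<in>B. sat_body (flip E j) G \<and> card (body_vars G) \<le> w}"

lemma forced_vars_if_flip_sat:
  assumes "G \<in> B" "sat_body (flip E j) G" "j \<in> U" "j \<notin> R" "body_vars G - {j} \<subseteq> R"
  shows "j \<in> forced_vars U B R (E \<inter> R)"
proof -
  have "sat_lit (E \<inter> R) l" if "l \<in> set G" "lit_var l \<noteq> j" for l
  proof -
    have "lit_var l \<in> R"
      using assms(5) that by (auto simp: body_vars_def)
    then have "sat_lit (E \<inter> R) l = sat_lit (flip E j) l"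
      using that(2) by (intro sat_lit_cong) (auto simp: mem_flip_iff)
    then show ?thesis
      using assms(2) that(1) by (simp add: sat_body_def)
  qed
  moreover have "\<not> (Pos j \<in> set G \<and> Neg j \<in> set G)"
    using assms(2) unfolding sat_body_def by (metis sat_lit.simps)
  ultimately show ?thesis
    using assms unfolding forced_vars_def by blast
qed

lemma sum_two_powr_card_forced_vars_le:
  assumes "finite U" "T \<subseteq> Pow U" "\<forall>E\<in>T. \<forall>G\<in>B. \<not> sat_body E G"
  shows "(\<Sum>E\<in>T. 2 powr card (forced_vars U B (fixed_vars U t) (E \<inter> fixed_vars U t))) \<le> 2 ^ card U"
proof -
  have "(\<Sum>E\<in>T. (2::nat) ^ card (forced_vars U B (fixed_vars U t) (E \<inter> fixed_vars U t))) \<le> 2 ^ card U"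
    using assms by (intro sum_two_pow_card_forced_vars_le) (auto simp: fixed_vars_def)
  then have "real (\<Sum>E\<in>T. (2::nat) ^ card (forced_vars U B (fixed_vars U t) (E \<inter> fixed_vars U t)))
      \<le> 2 ^ card U"
    by (metis of_nat_le_iff of_nat_numeral of_nat_power)
  then show ?thesis
    by (simp add: powr_realpow)
qed

lemma sum_card_forced_vars_ge:
  assumes "finite U" "N \<subseteq> U" "w \<ge> 1"
    and Gs: "\<And>j. j \<in> N \<Longrightarrow> Gs j \<in> B \<and> sat_body (flip E j) (Gs j) \<and> body_vars (Gs j) \<subseteq> U
                             \<and> card (body_vars (Gs j)) \<le> w"
  shows "card N * (real (2 * w) ^ card U / (4 * real w))
    \<le> (\<Sum>t\<in>restrictions U (2 * w). real (card (forced_vars U B (fixed_vars U t) (E \<inter> fixed_vars U t))))"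
proof -
  define \<Theta> where "\<Theta> = restrictions U (2 * w)"
  \<comment> \<open>\<open>t\<close> forces \<open>j\<close> if it leaves \<open>j\<close> free and fixes all other variables of the witness \<open>Gs j\<close>\<close>
  define hit where "hit t = {j \<in> N. t j = 0 \<and> (\<forall>v\<in>body_vars (Gs j) - {j}. t v \<noteq> 0)}" for t :: "nat \<Rightarrow> nat"
  have "finite N" "finite \<Theta>"
    using assms(1,2) by (auto simp: \<Theta>_def restrictions_def finite_PiE intro: finite_subset)
  have "card N * (real (2 * w) ^ card U / (4 * real w))
      \<le> (\<Sum>j\<in>N. real (card {t \<in> \<Theta>. t j = 0 \<and> (\<forall>v\<in>body_vars (Gs j) - {j}. t v \<noteq> 0)}))"
  proof (rule sum_bounded_below)
    fix j assume "j \<in> N"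
    then have "card (body_vars (Gs j) - {j}) \<le> w" "body_vars (Gs j) - {j} \<subseteq> U - {j}"
      using Gs[of j] by (auto intro: le_trans[OF card_Diff1_le])
    then show "real (2 * w) ^ card U / (4 * real w)
        \<le> real (card {t \<in> \<Theta>. t j = 0 \<and> (\<forall>v\<in>body_vars (Gs j) - {j}. t v \<noteq> 0)})"
      unfolding \<Theta>_def using \<open>j \<in> N\<close> assms(1-3) by (intro card_restrictions_free_fixing_ge) auto
  qed
  also have "\<dots> = (\<Sum>t\<in>\<Theta>. real (card (hit t)))"
    unfolding hit_def using sum_card_filter_swap[OF \<open>finite N\<close> \<open>finite \<Theta>\<close>]
    by (simp flip: of_nat_sum)
  also have "\<dots> \<le> (\<Sum>t\<in>\<Theta>. real (card (forced_vars U B (fixed_vars U t) (E \<inter> fixed_vars U t))))"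
  proof (intro sum_mono of_nat_mono card_mono subsetI)
    fix t j assume "j \<in> hit t"
    then show "j \<in> forced_vars U B (fixed_vars U t) (E \<inter> fixed_vars U t)"
      using Gs[of j] assms(2) by (intro forced_vars_if_flip_sat) (auto simp: hit_def fixed_vars_def)
  qed (use assms(1) finite_forced_vars in auto)
  finally show ?thesis
    by (simp add: \<Theta>_def)
qed

lemma card_mult_two_powr_narrow_flips_le:
  assumes "finite U" "A \<subseteq> U" "\<forall>G\<in>B. body_vars G \<subseteq> U" "w \<ge> 1"
  shows "card (restrictions U (2 * w)) * 2 powr (card (narrow_flips B w A E) / (4 * real w))
    \<le> (\<Sum>t\<in>restrictions U (2 * w). 2 powr card (forced_vars U B (fixed_vars U t) (E \<inter> fixed_vars U t)))"
proof -
  define \<Theta> where "\<Theta> = restrictions U (2 * w)"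
  define X where "X t = real (card (forced_vars U B (fixed_vars U t) (E \<inter> fixed_vars U t)))" for t
  have \<Theta>: "finite \<Theta>" "card \<Theta> = (2 * w) ^ card U" "card \<Theta> > 0"
    using assms(1,4) by (simp_all add: \<Theta>_def restrictions_def finite_PiE card_PiE)
  have "\<forall>j\<in>narrow_flips B w A E. \<exists>G. G \<in> B \<and> sat_body (flip E j) G \<and> body_vars G \<subseteq> U
      \<and> card (body_vars G) \<le> w"
    using assms(3) by (auto simp: narrow_flips_def)
  then obtain Gs where "\<And>j. j \<in> narrow_flips B w A E \<Longrightarrow> Gs j \<in> B \<and> sat_body (flip E j) (Gs j)
      \<and> body_vars (Gs j) \<subseteq> U \<and> card (body_vars (Gs j)) \<le> w"
    by metis
  then have "card (narrow_flips B w A E) * (real (2 * w) ^ card U / (4 * real w)) \<le> sum X \<Theta>"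
    unfolding X_def \<Theta>_def using assms by (intro sum_card_forced_vars_ge) (auto simp: narrow_flips_def)
  then have "card (narrow_flips B w A E) / (4 * real w) \<le> sum X \<Theta> / card \<Theta>"
    using \<Theta> by (simp add: field_simps)
  then have "card \<Theta> * 2 powr (card (narrow_flips B w A E) / (4 * real w))
      \<le> card \<Theta> * 2 powr (sum X \<Theta> / card \<Theta>)"
    by (intro mult_left_mono) auto
  also have "\<dots> \<le> (\<Sum>t\<in>\<Theta>. 2 powr X t)"
    using \<Theta> by (intro card_mult_two_powr_mean_le) auto
  finally show ?thesis
    by (simp add: X_def \<Theta>_def)
qed

lemma card_many_narrow_flips_le:
  assumes "finite U" "A \<subseteq> U" "\<forall>G\<in>B. body_vars G \<subseteq> U"
    and "T \<subseteq> Pow U" "\<forall>E\<in>T. \<forall>G\<in>B. \<not> sat_body E G" "w \<ge> 1"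
  shows "card {E \<in> T. h \<le> card (narrow_flips B w A E)} * 2 powr (h / (4 * real w)) \<le> 2 ^ card U"
proof -
  define \<Theta> where "\<Theta> = restrictions U (2 * w)"
  define Y where "Y t E = 2 powr card (forced_vars U B (fixed_vars U t) (E \<inter> fixed_vars U t))" for t E
  define good where "good = {E \<in> T. h \<le> card (narrow_flips B w A E)}"
  have "finite T" "good \<subseteq> T"
    using assms(1,4) by (auto simp: good_def intro: finite_subset)
  have "card \<Theta> > 0"
    using assms(1,6) by (simp add: \<Theta>_def restrictions_def card_PiE)
  have "card \<Theta> * (card good * 2 powr (h / (4 * real w))) = (\<Sum>E\<in>good. card \<Theta> * 2 powr (h / (4 * real w)))"
    by simp
  also have "\<dots> \<le> (\<Sum>E\<in>good. \<Sum>t\<in>\<Theta>. Y t E)"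
  proof (rule sum_mono)
    fix E assume "E \<in> good"
    then have "card \<Theta> * 2 powr (h / (4 * real w))
        \<le> card \<Theta> * 2 powr (card (narrow_flips B w A E) / (4 * real w))"
      by (intro mult_left_mono powr_mono divide_right_mono) (auto simp: good_def)
    also have "\<dots> \<le> (\<Sum>t\<in>\<Theta>. Y t E)"
      unfolding \<Theta>_def Y_def using assms by (intro card_mult_two_powr_narrow_flips_le) auto
    finally show "card \<Theta> * 2 powr (h / (4 * real w)) \<le> (\<Sum>t\<in>\<Theta>. Y t E)" .
  qed
  also have "\<dots> \<le> (\<Sum>E\<in>T. \<Sum>t\<in>\<Theta>. Y t E)"
    using \<open>finite T\<close> \<open>good \<subseteq> T\<close> by (intro sum_mono2) (auto simp: Y_def intro: sum_nonneg)
  also have "\<dots> = (\<Sum>t\<in>\<Theta>. \<Sum>E\<in>T. Y t E)"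
    by (rule sum.swap)
  also have "\<dots> \<le> (\<Sum>t\<in>\<Theta>. 2 ^ card U)"
    unfolding Y_def using assms by (intro sum_mono sum_two_powr_card_forced_vars_le)
  finally show ?thesis
    using \<open>card \<Theta> > 0\<close> by (simp add: good_def)
qed

lemma card_flip_sat_body_le:
  assumes "finite U" "body_vars G \<subseteq> U" "T \<subseteq> Pow U" "\<forall>E\<in>T. \<not> sat_body E G" "j \<in> U"
  shows "card {E \<in> T. sat_body (flip E j) G}
           \<le> (if j \<in> body_vars G then 2 ^ (card U - card (body_vars G)) else 0)"
proof (cases "j \<in> body_vars G")
  case True
  have "card {E \<in> T. sat_body (flip E j) G} = card ((\<lambda>E. flip E j) ` {E \<in> T. sat_body (flip E j) G})"
    by (simp add: card_image inj_on_flip)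
  also have "\<dots> \<le> card {E \<in> Pow U. sat_body E G}"
  proof (intro card_mono image_subsetI)
    fix E assume "E \<in> {E \<in> T. sat_body (flip E j) G}"
    then show "flip E j \<in> {E \<in> Pow U. sat_body E G}"
      using assms(3,5) flip_subset[of E U j] by auto
  qed (use assms(1) in simp)
  also have "\<dots> \<le> 2 ^ (card U - card (body_vars G))"
    using assms by (intro card_sat_body_le)
  finally show ?thesis
    using True by simp
next
  case False
  then have "{E \<in> T. sat_body (flip E j) G} = {}"
    using assms(4) by (simp add: sat_body_flip_other)
  then show ?thesis
    using False by (simp only: card.empty if_False order.refl)
qed

lemma sum_card_flip_sat_body_le:
  assumes "finite U" "body_vars G \<subseteq> U" "T \<subseteq> Pow U" "\<forall>E\<in>T. \<not> sat_body E G"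
    and "w < card (body_vars G)"
  shows "(\<Sum>j\<in>U. card {E \<in> T. sat_body (flip E j) G}) * 2 ^ (w + 1) \<le> card U * 2 ^ card U"
proof -
  define v where "v = card (body_vars G)"
  have "v \<le> card U"
    using assms by (simp add: v_def card_mono)
  have "(\<Sum>j\<in>U. card {E \<in> T. sat_body (flip E j) G}) \<le> (\<Sum>j\<in>U. if j \<in> body_vars G then 2 ^ (card U - v) else 0)"
    using assms card_flip_sat_body_le unfolding v_def by (intro sum_mono) blast
  also have "\<dots> = v * 2 ^ (card U - v)"
    using assms by (simp add: sum.If_cases Int_absorb1 v_def)
  finally have "(\<Sum>j\<in>U. card {E \<in> T. sat_body (flip E j) G}) * 2 ^ (w + 1) \<le> v * 2 ^ (card U - v) * 2 ^ v"
    using assms(5) by (intro mult_mono power_increasing) (auto simp: v_def)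
  also have "\<dots> = v * 2 ^ card U"
    using \<open>v \<le> card U\<close> by (simp add: mult.assoc flip: power_add)
  also have "\<dots> \<le> card U * 2 ^ card U"
    using \<open>v \<le> card U\<close> by simp
  finally show ?thesis .
qed

lemma card_not_narrow_flips_le:
  assumes "finite U" "A \<subseteq> U" "finite B" "\<forall>j\<in>A. \<exists>G\<in>B. sat_body (flip E j) G"
  shows "card (A - narrow_flips B w A E)
           \<le> (\<Sum>G\<in>{G \<in> B. w < card (body_vars G)}. card {j \<in> U. sat_body (flip E j) G})"
proof -
  let ?wide = "{G \<in> B. w < card (body_vars G)}"
  have "A - narrow_flips B w A E \<subseteq> (\<Union>G\<in>?wide. {j \<in> U. sat_body (flip E j) G})"
  proof
    fix j assume j: "j \<in> A - narrow_flips B w A E"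
    then obtain G where G: "G \<in> B" "sat_body (flip E j) G"
      using assms(4) by blast
    then have "G \<in> ?wide"
      using j not_le_imp_less unfolding narrow_flips_def by blast
    then show "j \<in> (\<Union>G\<in>?wide. {j \<in> U. sat_body (flip E j) G})"
      using G j assms(2) by blast
  qed
  then have "card (A - narrow_flips B w A E) \<le> card (\<Union>G\<in>?wide. {j \<in> U. sat_body (flip E j) G})"
    using assms(1,3) by (intro card_mono) auto
  also have "\<dots> \<le> (\<Sum>G\<in>?wide. card {j \<in> U. sat_body (flip E j) G})"
    using assms(3) by (intro card_UN_le) simp
  finally show ?thesis .
qed

lemma card_many_wide_flips_le:
  assumes U: "finite U" "A \<subseteq> U" "finite B" "\<forall>G\<in>B. body_vars G \<subseteq> U"
    and T: "T \<subseteq> Pow U" "\<forall>E\<in>T. \<forall>G\<in>B. \<not> sat_body E G" "\<forall>E\<in>T. \<forall>j\<in>A. \<exists>G\<in>B. sat_body (flip E j) G"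
  shows "c * card {E \<in> T. c \<le> card (A - narrow_flips B w A E)} * 2 ^ (w + 1) \<le> card B * card U * 2 ^ card U"
proof -
  define bad where "bad = {E \<in> T. c \<le> card (A - narrow_flips B w A E)}"
  define wide where "wide = {G \<in> B. w < card (body_vars G)}"
  have "finite T"
    using U T by (meson finite_Pow_iff finite_subset)
  then have "finite bad" "finite wide" "bad \<subseteq> T" "wide \<subseteq> B"
    using U by (auto simp: bad_def wide_def)
  have "c * card bad = (\<Sum>E\<in>bad. c)"
    by simp
  also have "\<dots> \<le> (\<Sum>E\<in>bad. \<Sum>G\<in>wide. card {j \<in> U. sat_body (flip E j) G})"
  proof (rule sum_mono)
    fix E assume "E \<in> bad"
    then show "c \<le> (\<Sum>G\<in>wide. card {j \<in> U. sat_body (flip E j) G})"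
      using card_not_narrow_flips_le[OF U(1-3), of E w] T(3) \<open>bad \<subseteq> T\<close>
      by (force simp: bad_def wide_def)
  qed
  also have "\<dots> = (\<Sum>G\<in>wide. \<Sum>E\<in>bad. card {j \<in> U. sat_body (flip E j) G})"
    by (rule sum.swap)
  also have "\<dots> = (\<Sum>G\<in>wide. \<Sum>j\<in>U. card {E \<in> bad. sat_body (flip E j) G})"
    using \<open>finite bad\<close> U by (intro sum.cong refl sum_card_filter_swap)
  finally have "c * card bad * 2 ^ (w + 1) \<le> (\<Sum>G\<in>wide. \<Sum>j\<in>U. card {E \<in> bad. sat_body (flip E j) G}) * 2 ^ (w + 1)"
    by (rule mult_right_mono) simp
  also have "\<dots> = (\<Sum>G\<in>wide. (\<Sum>j\<in>U. card {E \<in> bad. sat_body (flip E j) G}) * 2 ^ (w + 1))"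
    by (rule sum_distrib_right)
  also have "\<dots> \<le> (\<Sum>G\<in>wide. card U * 2 ^ card U)"
    using U T \<open>bad \<subseteq> T\<close> by (intro sum_mono sum_card_flip_sat_body_le) (auto simp: wide_def)
  also have "\<dots> \<le> card B * card U * 2 ^ card U"
    using card_mono[OF \<open>finite B\<close> \<open>wide \<subseteq> B\<close>] by simp
  finally show ?thesis
    by (simp add: bad_def)
qed

lemma card_critical_family_le:
  assumes U: "finite U" "A \<subseteq> U" "finite B" "\<forall>G\<in>B. body_vars G \<subseteq> U"
    and T: "T \<subseteq> Pow U" "\<forall>E\<in>T. \<forall>G\<in>B. \<not> sat_body E G" "\<forall>E\<in>T. \<forall>j\<in>A. \<exists>G\<in>B. sat_body (flip E j) G"
    and "w \<ge> 1" "c > 0" "c + h \<le> card A + 1"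
  shows "card T / 2 ^ card U \<le> 1 / 2 powr (h / (4 * real w)) + real (card B) * card U / (real c * 2 ^ (w + 1))"
proof -
  define good where "good = {E \<in> T. h \<le> card (narrow_flips B w A E)}"
  define bad where "bad = {E \<in> T. c \<le> card (A - narrow_flips B w A E)}"
  have "finite T"
    using U T by (meson finite_Pow_iff finite_subset)
  have "T \<subseteq> good \<union> bad"
  proof
    fix E assume "E \<in> T"
    have "narrow_flips B w A E \<subseteq> A" "finite A"
      using U by (auto simp: narrow_flips_def intro: finite_subset)
    then have "card (A - narrow_flips B w A E) = card A - card (narrow_flips B w A E)"
      by (simp add: card_Diff_subset finite_subset)
    then have "h \<le> card (narrow_flips B w A E) \<or> c \<le> card (A - narrow_flips B w A E)"
      using assms(10) by linarith
    then show "E \<in> good \<union> bad"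
      using \<open>E \<in> T\<close> by (auto simp: good_def bad_def)
  qed
  then have "card T \<le> card (good \<union> bad)"
    using \<open>finite T\<close> by (intro card_mono) (simp_all add: good_def bad_def)
  also have "\<dots> \<le> card good + card bad"
    by (rule card_Un_le)
  finally have "card T / 2 ^ card U \<le> card good / 2 ^ card U + card bad / 2 ^ card U"
    by (simp add: divide_right_mono flip: add_divide_distrib)
  moreover have "card good / 2 ^ card U \<le> 1 / 2 powr (h / (4 * real w))"
    using card_many_narrow_flips_le[OF U(1,2,4) T(1,2) \<open>w \<ge> 1\<close>, of h]
    by (simp add: good_def divide_le_eq pos_le_divide_eq)
  moreover have "real (c * card bad * 2 ^ (w + 1)) \<le> real (card B * card U * 2 ^ card U)"
    using card_many_wide_flips_le[OF U T, of c w] by (simp only: bad_def of_nat_le_iff)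
  then have "card bad / 2 ^ card U \<le> real (card B) * card U / (real c * 2 ^ (w + 1))"
    using \<open>c > 0\<close> by (simp add: divide_le_eq pos_le_divide_eq mult_ac)
  ultimately show ?thesis
    by linarith
qed

section \<open>Theories whose models are PARITY\<close>

lemma is_model_iff_odd:
  assumes "models n D = parity n" "E \<subseteq> {1..n}"
  shows "is_model n D E \<longleftrightarrow> odd (card E)"
proof -
  have "E \<in> models n D \<longleftrightarrow> E \<in> parity n"
    using assms(1) by simp
  then show ?thesis
    using assms(2) by (simp add: models_def parity_def)
qed

lemma model_sat_head:
  assumes "is_model n D K" "(H, G) \<in> D" "sat_body K G"
  shows "sat_head K H"
  using assms unfolding is_model_def reduct_def by blast

definition head_bodies :: "rule set \<Rightarrow> nat \<Rightarrow> literal list set" where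
  "head_bodies D i = {G. \<exists>l. (HLit l, G) \<in> D \<and> lit_var l = i}"

lemma head_bodies_subset: "head_bodies D i \<subseteq> snd ` D"
  by (force simp: head_bodies_def)

lemma finite_head_bodies: "finite D \<Longrightarrow> finite (head_bodies D i)"
  by (rule finite_subset[OF head_bodies_subset]) simp

lemma card_head_bodies_le: "finite D \<Longrightarrow> card (head_bodies D i) \<le> card D"
  by (meson card_image_le card_mono finite_imageI head_bodies_subset le_trans)

lemma model_fires_head_bodies:
  assumes "is_model n D K" "i \<in> {1..n}"
  shows "\<exists>G\<in>head_bodies D i. sat_body K G"
proof -
  have "K \<subseteq> {1..n}"
    using assms(1) by (simp add: is_model_def)
  then have "flip K i \<subseteq> {1..n}" "flip K i \<noteq> K"
    using assms(2) by (simp_all add: flip_subset flip_neq)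
  then obtain H where H: "H \<in> reduct D K" "\<not> sat_head (flip K i) H"
    using assms(1) unfolding is_model_def by blast
  then obtain G where G: "(H, G) \<in> D" "sat_body K G"
    by (auto simp: reduct_def)
  then have "sat_head K H"
    using model_sat_head[OF assms(1)] by blast
  \<comment> \<open>flipping \<open>i\<close> falsifies \<open>H\<close>, so \<open>H\<close> is a literal on \<open>i\<close>\<close>
  with H(2) have "i \<in> head_vars H"
    using sat_head_flip_other by blast
  with G show ?thesis
    by (cases H) (auto simp: head_bodies_def)
qed

lemma violated_rule_covers_signature:
  assumes "models n D = parity n" "(H, G) \<in> D"
    and "E \<subseteq> {1..n}" "even (card E)" "sat_body E G" "\<not> sat_head E H" "j \<in> {1..n}"
  shows "j \<in> body_vars G \<union> head_vars H"
proof (rule ccontr)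
  assume "j \<notin> body_vars G \<union> head_vars H"
  then have body: "sat_body (flip E j) G" and head: "\<not> sat_head (flip E j) H"
    using assms(5,6) by (simp_all add: sat_body_flip_other sat_head_flip_other)
  have "finite E"
    using assms(3) finite_subset by blast
  then have "is_model n D (flip E j)"
    using assms(1,3,4,7) by (simp add: is_model_iff_odd flip_subset even_card_flip)
  then show False
    using model_sat_head assms(2) body head by blast
qed

lemma card_violating_even_le_1:
  assumes "models n D = parity n" "(H, G) \<in> D"
  shows "card {E \<in> Pow {1..n}. even (card E) \<and> sat_body E G \<and> \<not> sat_head E H} \<le> 1"
proof -
  have "E1 = E2"
    if "E1 \<in> Pow {1..n}" "even (card E1)" "sat_body E1 G" "\<not> sat_head E1 H"
      and "E2 \<in> Pow {1..n}" "even (card E2)" "sat_body E2 G" "\<not> sat_head E2 H" for E1 E2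
  proof (rule set_eqI)
    fix x
    show "x \<in> E1 \<longleftrightarrow> x \<in> E2"
    proof (cases "x \<in> {1..n}")
      case True
      then show ?thesis
        using violated_rule_covers_signature[OF assms, of E1 x] that sat_body_agree sat_head_agree
        by blast
    qed (use that in blast)
  qed
  then show ?thesis
    unfolding One_nat_def by (subst card_le_Suc0_iff_eq) auto
qed

lemma even_interpretation_unsupported_var:
  assumes "models n D = parity n" "E \<subseteq> {1..n}" "even (card E)"
    and "\<forall>(H, G)\<in>D. sat_body E G \<longrightarrow> sat_head E H"
  shows "\<exists>i\<in>{1..n}. \<forall>G\<in>head_bodies D i. \<not> sat_body E G"
proof -
  have "\<not> is_model n D E"
    using assms(1-3) by (simp add: is_model_iff_odd)
  moreover have heads: "\<forall>H\<in>reduct D E. sat_head E H"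
    using assms(4) by (auto simp: reduct_def)
  ultimately obtain J where J: "J \<subseteq> {1..n}" "J \<noteq> E" "\<forall>H\<in>reduct D E. sat_head J H"
    using assms(2) unfolding is_model_def by blast
  then obtain i where i: "i \<in> E \<longleftrightarrow> i \<notin> J"
    by blast
  have "\<not> sat_body E G" if G: "G \<in> head_bodies D i" for G
  proof
    assume "sat_body E G"
    moreover obtain l where "(HLit l, G) \<in> D" "lit_var l = i"
      using G by (auto simp: head_bodies_def)
    ultimately have "HLit l \<in> reduct D E"
      by (auto simp: reduct_def)
    then have "sat_lit E l" "sat_lit J l"
      using heads J(3) by auto
    then show False
      using \<open>lit_var l = i\<close> i by (cases l) auto
  qed
  moreover have "i \<in> {1..n}"
    using i J(1) assms(2) by blast
  ultimately show ?thesis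
    by blast
qed

lemma head_bodies_vars_subset:
  assumes "simple_theory_on n D" "G \<in> head_bodies D i"
  shows "body_vars G \<subseteq> {1..n}"
proof -
  obtain l where "(HLit l, G) \<in> D"
    using assms(2) by (auto simp: head_bodies_def)
  then show ?thesis
    using assms(1) unfolding simple_theory_on_def body_vars_def by blast
qed

lemma flip_even_fires_head_bodies:
  assumes "models n D = parity n" "E \<subseteq> {1..n}" "even (card E)" "i \<in> {1..n}" "j \<in> {1..n}"
  shows "\<exists>G\<in>head_bodies D i. sat_body (flip E j) G"
proof -
  have "finite E"
    using assms(2) finite_subset by blast
  then have "is_model n D (flip E j)"
    using assms by (simp add: is_model_iff_odd flip_subset even_card_flip)
  then show ?thesis
    using model_fires_head_bodies assms(4) by blast
qed

lemma card_unsupported_even_le: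
  assumes "simple_theory_on n D" "models n D = parity n" "i \<in> {1..n}"
    and "w \<ge> 1" "c > 0" "c + h \<le> n + 1"
  shows "card {E \<in> Pow {1..n}. even (card E) \<and> (\<forall>G\<in>head_bodies D i. \<not> sat_body E G)} / 2 ^ n
           \<le> 1 / 2 powr (real h / (4 * real w)) + real (card D) * n / (real c * 2 ^ (w + 1))"
proof -
  let ?T = "{E \<in> Pow {1..n}. even (card E) \<and> (\<forall>G\<in>head_bodies D i. \<not> sat_body E G)}"
  have "finite D"
    using assms(1) by (simp add: simple_theory_on_def)
  have B: "finite (head_bodies D i)" "\<forall>G\<in>head_bodies D i. body_vars G \<subseteq> {1..n}"
    using \<open>finite D\<close> head_bodies_vars_subset[OF assms(1)] by (auto simp: finite_head_bodies)
  have T: "?T \<subseteq> Pow {1..n}" "\<forall>E\<in>?T. \<forall>G\<in>head_bodies D i. \<not> sat_body E G"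
    "\<forall>E\<in>?T. \<forall>j\<in>{1..n}. \<exists>G\<in>head_bodies D i. sat_body (flip E j) G"
    using flip_even_fires_head_bodies[OF assms(2) _ _ assms(3)] by auto
  have "card ?T / 2 ^ n \<le> 1 / 2 powr (real h / (4 * real w))
      + real (card (head_bodies D i)) * n / (real c * 2 ^ (w + 1))"
    using card_critical_family_le[OF finite_atLeastAtMost subset_refl B T assms(4,5)] assms(6)
    by simp
  also have "\<dots> \<le> 1 / 2 powr (real h / (4 * real w)) + real (card D) * n / (real c * 2 ^ (w + 1))"
    using card_head_bodies_le[OF \<open>finite D\<close>, of i]
    by (intro add_left_mono divide_right_mono mult_right_mono) auto
  finally show ?thesis .
qed

lemma parity_theory_card_bound:
  assumes "n \<ge> 1" "simple_theory_on n D" "models n D = parity n"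
    and "w \<ge> 1" "c > 0" "c + h \<le> n + 1"
  shows "1 / 2 \<le> card D / 2 ^ n
           + n * (1 / 2 powr (real h / (4 * real w)) + real (card D) * n / (real c * 2 ^ (w + 1)))"
proof -
  define U where "U = {1..n}"
  define Ev where "Ev = {E \<in> Pow U. even (card E)}"
  define violating where "violating r = {E \<in> Ev. sat_body E (snd r) \<and> \<not> sat_head E (fst r)}" for r
  define bound where "bound = 1 / 2 powr (real h / (4 * real w)) + real (card D) * n / (real c * 2 ^ (w + 1))"
  define unsupported where "unsupported i = {E \<in> Ev. \<forall>G\<in>head_bodies D i. \<not> sat_body E G}" for i
  have U: "finite U" "card U = n" "U \<noteq> {}"
    using assms(1) by (auto simp: U_def)
  have "finite D"
    using assms(2) by (simp add: simple_theory_on_def)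
  have "Ev \<subseteq> (\<Union>r\<in>D. violating r) \<union> (\<Union>i\<in>U. unsupported i)"
  proof
    fix E assume E: "E \<in> Ev"
    show "E \<in> (\<Union>r\<in>D. violating r) \<union> (\<Union>i\<in>U. unsupported i)"
    proof (cases "\<forall>(H, G)\<in>D. sat_body E G \<longrightarrow> sat_head E H")
      case True
      then show ?thesis
        using even_interpretation_unsupported_var[OF assms(3), of E] E
        by (auto simp: Ev_def U_def unsupported_def)
    next
      case False
      then obtain H G where "(H, G) \<in> D" "sat_body E G" "\<not> sat_head E H"
        by blast
      then show ?thesis
        using E by (force simp: violating_def)
    qed
  qed
  moreover have "finite ((\<Union>r\<in>D. violating r) \<union> (\<Union>i\<in>U. unsupported i))"
    by (rule finite_subset[of _ "Pow U"]) (auto simp: violating_def unsupported_def Ev_def U(1))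
  ultimately have "card Ev \<le> card ((\<Union>r\<in>D. violating r) \<union> (\<Union>i\<in>U. unsupported i))"
    by (rule card_mono[rotated])
  also have "\<dots> \<le> (\<Sum>r\<in>D. card (violating r)) + (\<Sum>i\<in>U. card (unsupported i))"
    using \<open>finite D\<close> U(1) by (intro card_Un_le[THEN le_trans] add_mono card_UN_le)
  also have "\<dots> \<le> card D + (\<Sum>i\<in>U. card (unsupported i))"
    using card_violating_even_le_1[OF assms(3)] sum_mono[of D "\<lambda>r. card (violating r)" "\<lambda>_. 1"]
    by (force simp: violating_def Ev_def U_def conj_assoc)
  finally have "real (card Ev) \<le> card D + (\<Sum>i\<in>U. real (card (unsupported i)))"
    by (metis of_nat_add of_nat_le_iff of_nat_sum)
  then have "card Ev / 2 ^ n \<le> (card D + (\<Sum>i\<in>U. real (card (unsupported i)))) / 2 ^ n"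
    by (rule divide_right_mono) simp
  also have "\<dots> = card D / 2 ^ n + (\<Sum>i\<in>U. card (unsupported i) / 2 ^ n)"
    by (simp add: add_divide_distrib sum_divide_distrib)
  also have "\<dots> \<le> card D / 2 ^ n + (\<Sum>i\<in>U. bound)"
    using card_unsupported_even_le[OF assms(2,3) _ assms(4-6)]
    by (intro add_left_mono sum_mono) (simp add: unsupported_def Ev_def U_def bound_def)
  also have "\<dots> = card D / 2 ^ n + n * bound"
    using U(2) by simp
  finally have "card Ev / 2 ^ n \<le> card D / 2 ^ n + n * bound" .
  moreover have "real (2 * card Ev) = real (2 ^ n)"
    using card_even_subsets[OF U(1,3)] U(2) by (simp only: Ev_def)
  then have "card Ev / 2 ^ n = 1 / 2"
    by (simp add: field_simps)
  ultimately show ?thesis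
    unfolding bound_def by linarith
qed

section \<open>Asymptotics\<close>

lemma parity_theory_card_bound_square:
  assumes "w \<ge> 2" "simple_theory_on (w\<^sup>2) D" "models (w\<^sup>2) D = parity (w\<^sup>2)"
    and "real (card D) \<le> C * real w ^ (2 * d)"
  shows "1 / 2 \<le> 2 * C * real w ^ (2 * d + 2) / 2 ^ w
                 + real w ^ 2 / 2 powr ((real w ^ 2 - 1) / (8 * real w))"
proof -
  define n where "n = w\<^sup>2"
  define h where "h = n div 2"
  define c where "c = n - h"
  define s where "s = real (card D)"
  define P where "P = 2 powr (real h / (4 * real w))"
  define t where "t = s * n / 2 ^ w"
  have "w \<le> n"
    using assms(1) by (simp add: n_def power2_eq_square)
  then have n: "n \<ge> 1" "c > 0" "c + h \<le> n + 1" "n \<le> 2 * c"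
    using assms(1) by (auto simp: c_def h_def)
  have "s \<ge> 0"
    by (simp add: s_def)
  have "1 / 2 \<le> s / 2 ^ n + n * (1 / P + s * n / (real c * 2 ^ (w + 1)))"
    using parity_theory_card_bound[OF n(1) assms(2,3)[folded n_def] _ n(2,3), of w] assms(1)
    by (simp add: s_def P_def)
  then have "1 / 2 \<le> s / 2 ^ n + n / P + s * n * (n / c) / 2 ^ (w + 1)"
    by (simp add: distrib_left mult_ac)
  moreover have "s / 2 ^ n \<le> t"
  proof -
    have "s / 2 ^ n \<le> s / 2 ^ w"
      using \<open>s \<ge> 0\<close> \<open>w \<le> n\<close> by (intro divide_left_mono power_increasing) auto
    also have "\<dots> \<le> t"
      using \<open>s \<ge> 0\<close> n(1) unfolding t_def by (intro divide_right_mono) (auto simp: mult_le_cancel_left1)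
    finally show ?thesis .
  qed
  moreover have "s * n * (n / c) / 2 ^ (w + 1) \<le> t"
  proof -
    have "real n / c \<le> 2"
      using n(2,4) by (simp add: divide_le_eq flip: of_nat_le_iff)
    then have "s * n * (n / c) / 2 ^ (w + 1) \<le> s * n * 2 / 2 ^ (w + 1)"
      using \<open>s \<ge> 0\<close> by (intro divide_right_mono mult_left_mono) auto
    also have "\<dots> = t"
      by (simp add: t_def)
    finally show ?thesis .
  qed
  moreover have "n / P \<le> real w ^ 2 / 2 powr ((real w ^ 2 - 1) / (8 * real w))"
  proof -
    have "real n \<le> 2 * h + 1"
      by (simp add: h_def)
    then have "(real w ^ 2 - 1) / (8 * real w) \<le> real h / (4 * real w)"
      using assms(1) by (simp add: n_def divide_le_eq field_simps)
    then show ?thesis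
      by (simp add: P_def n_def divide_left_mono)
  qed
  moreover have "t \<le> C * real w ^ (2 * d + 2) / 2 ^ w"
  proof -
    have "s * n \<le> C * real w ^ (2 * d) * real w ^ 2"
      using assms(4) by (simp add: s_def n_def mult_right_mono)
    also have "\<dots> = C * real w ^ (2 * d + 2)"
      by (simp add: power_add power2_eq_square)
    finally show ?thesis
      unfolding t_def by (rule divide_right_mono) simp
  qed
  ultimately show ?thesis
    by linarith
qed

lemma abs_poly_le_const_mult_power:
  fixes p :: "real poly"
  shows "\<exists>C. \<forall>x\<ge>1. \<bar>poly p x\<bar> \<le> C * x ^ degree p"
proof (intro exI allI impI)
  fix x :: real assume "x \<ge> 1"
  have "\<bar>poly p x\<bar> \<le> (\<Sum>i\<le>degree p. \<bar>coeff p i * x ^ i\<bar>)"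
    unfolding poly_altdef by (rule sum_abs)
  also have "\<dots> \<le> (\<Sum>i\<le>degree p. \<bar>coeff p i\<bar> * x ^ degree p)"
    using \<open>x \<ge> 1\<close> by (intro sum_mono) (simp add: abs_mult mult_left_mono power_increasing)
  finally show "\<bar>poly p x\<bar> \<le> (\<Sum>i\<le>degree p. \<bar>coeff p i\<bar>) * x ^ degree p"
    by (simp add: sum_distrib_right)
qed

lemma eventually_parity_bound_lt_half:
  "\<forall>\<^sub>F w in sequentially.
     2 * C * real w ^ (2 * d + 2) / 2 ^ w + real w ^ 2 / 2 powr ((real w ^ 2 - 1) / (8 * real w)) < 1 / 2"
proof -
  have "(\<lambda>w::nat. real w ^ (2 * d + 2) / 2 ^ w) \<longlonglongrightarrow> 0"
    by real_asymp
  moreover have "(\<lambda>w::nat. real w ^ 2 / 2 powr ((real w ^ 2 - 1) / (8 * real w))) \<longlonglongrightarrow> 0"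
    by real_asymp
  ultimately have "(\<lambda>w. 2 * C * (real w ^ (2 * d + 2) / 2 ^ w)
      + real w ^ 2 / 2 powr ((real w ^ 2 - 1) / (8 * real w))) \<longlonglongrightarrow> 2 * C * 0 + 0"
    by (intro tendsto_intros)
  then have "(\<lambda>w. 2 * C * real w ^ (2 * d + 2) / 2 ^ w
      + real w ^ 2 / 2 powr ((real w ^ 2 - 1) / (8 * real w))) \<longlonglongrightarrow> 0"
    by simp
  then show ?thesis
    by (rule order_tendstoD(2)) simp
qed

theorem mainTheorem18:
  shows "\<not> (\<exists>(p :: real poly) (D :: nat \<Rightarrow> rule set).
            \<forall>n\<ge>1. simple_theory_on n (D n) \<and> models n (D n) = parity n
                  \<and> real (card (D n)) \<le> poly p (real n))"
proof
  assume "\<exists>(p :: real poly) (D :: nat \<Rightarrow> rule set).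
            \<forall>n\<ge>1. simple_theory_on n (D n) \<and> models n (D n) = parity n
                  \<and> real (card (D n)) \<le> poly p (real n)"
  then obtain p :: "real poly" and D :: "nat \<Rightarrow> rule set" where D: "\<And>n. n \<ge> 1 \<Longrightarrow>
      simple_theory_on n (D n) \<and> models n (D n) = parity n \<and> real (card (D n)) \<le> poly p (real n)"
    by blast
  obtain C where C: "\<forall>x\<ge>1. \<bar>poly p x\<bar> \<le> C * x ^ degree p"
    using abs_poly_le_const_mult_power by blast
  obtain w where w: "w \<ge> 2" "2 * C * real w ^ (2 * degree p + 2) / 2 ^ w
      + real w ^ 2 / 2 powr ((real w ^ 2 - 1) / (8 * real w)) < 1 / 2"
    using eventually_conj[OF eventually_ge_at_top[of 2] eventually_parity_bound_lt_half]
    unfolding eventually_sequentially by (meson order_refl)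
  then have "w\<^sup>2 \<ge> 1"
    by (simp add: power2_eq_square Suc_le_eq)
  have "real (card (D (w\<^sup>2))) \<le> \<bar>poly p (real (w\<^sup>2))\<bar>"
    using D[OF \<open>w\<^sup>2 \<ge> 1\<close>] by linarith
  also have "\<dots> \<le> C * real (w\<^sup>2) ^ degree p"
    using C \<open>w\<^sup>2 \<ge> 1\<close> by (metis of_nat_1 of_nat_le_iff)
  also have "\<dots> = C * real w ^ (2 * degree p)"
    by (simp add: power_mult)
  finally have "1 / 2 \<le> 2 * C * real w ^ (2 * degree p + 2) / 2 ^ w
      + real w ^ 2 / 2 powr ((real w ^ 2 - 1) / (8 * real w))"
    using parity_theory_card_bound_square[OF w(1)] D[OF \<open>w\<^sup>2 \<ge> 1\<close>] by blast
  with w(2) show False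
    by linarith
qed

end
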